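(* Let $\mathbb{X}$ be an infinite-dimensional (real or complex) Banach space and let $\mathcal{B}=(\mathbf{e}_n)_{n=1}^\infty$ be a semi-normalized basis of $\mathbb{X}$ with $C_w=1$, i.e. $\|\mathcal{G}_N(x)\|\le\|x\|$ for every $x\in\mathbb{X}$, every $N\in\mathbb{N}$ and every choice of greedy set $\Lambda_N(x)$. Then $C_t=1$, i.e. $\|x-\mathcal{G}_N(x)\|\le\|x\|$ for all such $x$, $N$, $\Lambda_N(x)$; in particular $\mathcal{B}$ is $1$-quasi-greedy.
   Context: A basis $(\mathbf{e}_n)_{n=1}^\infty$ is a Schauder basis; semi-normalized means $0<\inf_n\|\mathbf{e}_n\|\le\sup_n\|\mathbf{e}_n\|<\infty$. Let $(\mathbf{e}_n^* )$ be the biorthogonal functionals. For $x\in\mathbb{X}$ and $N\in\mathbb{N}$, a greedy set $\Lambda_N(x)$ is any set of $N$ indices with $\min\{|\mathbf{e}_j^*(x)|: j\in\Lambda_N(x)\}\ge\max\{|\mathbf{e}_j^*(x)|: j\notin\Lambda_N(x)\}$, and $\mathcal{G}_N(x)=\sum_{j\in\Lambda_N(x)}\mathbf{e}_j^*(x)\mathbf{e}_j$. $C_w$ is the smallest constant $C$ with $\|\mathcal{G}_N(x)\|\le C\|x\|$ for all $x,N$ and choices of greedy sets; $C_t$ is the smallest $\tilde C$ with $\|x-\mathcal{G}_N(x)\|\le\tilde C\|x\|$ for all $x,N$ and choices of greedy sets. The quasi-greedy constant is $C_{qg}=\max\{C_w,C_t\}$, and the basis is $1$-quasi-greedy if $C_{qg}\le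 1$. *)

theory Defs
  imports "HOL-Analysis.Analysis"
begin

text \<open>Scalar multiplication by a normed field 'k (used with 'k = real or 'k = complex)
  on a real normed space, compatible with the real structure and with the norm.\<close>
definition scalar_action :: "('k::real_normed_field \<Rightarrow> 'a::real_normed_vector \<Rightarrow> 'a) \<Rightarrow> bool" where
  "scalar_action sc \<longleftrightarrow>
     (\<forall>a b x. sc (a + b) x = sc a x + sc b x) \<and>
     (\<forall>a x y. sc a (x + y) = sc a x + sc a y) \<and>
     (\<forall>a b x. sc (a * b) x = sc a (sc b x)) \<and>
     (\<forall>x. sc 1 x = x) \<and>
     (\<forall>r x. sc (of_real r) x = scaleR r x) \<and>
     (\<forall>a x. norm (sc a x) = norm a * norm x)"

definition schauder_basis :: "('k::real_normed_field \<Rightarrow> 'a::real_normed_vector \<Rightarrow> 'a) \<Rightarrow> (nat \<Rightarrow> 'a) \<Rightarrow> bool" where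
  "schauder_basis sc e \<longleftrightarrow>
     (\<forall>x. \<exists>!a. (\<lambda>N. \<Sum>n<N. sc (a n) (e n)) \<longlonglongrightarrow> x)"

definition basis_coeff :: "('k::real_normed_field \<Rightarrow> 'a::real_normed_vector \<Rightarrow> 'a) \<Rightarrow> (nat \<Rightarrow> 'a) \<Rightarrow> 'a \<Rightarrow> nat \<Rightarrow> 'k" where
  "basis_coeff sc e x = (THE a. (\<lambda>N. \<Sum>n<N. sc (a n) (e n)) \<longlonglongrightarrow> x)"

definition semi_normalized :: "(nat \<Rightarrow> 'a::real_normed_vector) \<Rightarrow> bool" where
  "semi_normalized e \<longleftrightarrow> (\<exists>c C. 0 < c \<and> (\<forall>n. c \<le> norm (e n) \<and> norm (e n) \<le> C))"

definition greedy_set :: "('k::real_normed_field \<Rightarrow> 'a::real_normed_vector \<Rightarrow> 'a) \<Rightarrow> (nat \<Rightarrow> 'a) \<Rightarrow> 'a \<Rightarrow> nat \<Rightarrow> nat set \<Rightarrow> bool" where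
  "greedy_set sc e x N A \<longleftrightarrow> finite A \<and> card A = N \<and>
     (\<forall>j\<in>A. \<forall>k. k \<notin> A \<longrightarrow> norm (basis_coeff sc e x k) \<le> norm (basis_coeff sc e x j))"

definition greedy_sum :: "('k::real_normed_field \<Rightarrow> 'a::real_normed_vector \<Rightarrow> 'a) \<Rightarrow> (nat \<Rightarrow> 'a) \<Rightarrow> 'a \<Rightarrow> nat set \<Rightarrow> 'a" where
  "greedy_sum sc e x A = (\<Sum>j\<in>A. sc (basis_coeff sc e x j) (e j))"

end

theory Submission
  imports Defs
begin

text \<open>If \<open>C\<^sub>w = 1\<close>, every finite coordinate projection \<open>P\<^sub>F x = \<Sum>\<^sub>j\<^sub>\<in>\<^sub>F e\<^sub>j\<^sup>*(x) e\<^sub>j\<close> has norm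
  at most \<open>\<parallel>x\<parallel>\<close>. Indeed, for small \<open>d > 0\<close> the vector \<open>y = d x + (1 - d) P\<^sub>F x\<close> keeps the
  coefficients of \<open>x\<close> on \<open>F\<close> and shrinks all others by the factor \<open>d\<close>, so \<open>F\<close> is a greedy set
  of \<open>y\<close> (after discarding zero coefficients) with \<open>\<G>(y) = P\<^sub>F x\<close>. Hence
  \<open>\<parallel>P\<^sub>F x\<parallel> \<le> \<parallel>y\<parallel> \<le> d\<parallel>x\<parallel> + (1 - d)\<parallel>P\<^sub>F x\<parallel>\<close>, i.e. \<open>\<parallel>P\<^sub>F x\<parallel> \<le> \<parallel>x\<parallel>\<close>. Finally
  \<open>x - \<G>(x)\<close> is the limit of the projections onto \<open>{..<m} - \<Lambda>\<close>.\<close>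

lemma scalar_action_scaleR: "scalar_action (scaleR :: real \<Rightarrow> 'a::real_normed_vector \<Rightarrow> 'a)"
  unfolding scalar_action_def by (auto simp: scaleR_left_distrib scaleR_right_distrib)

lemma scalar_action_zero:
  assumes "scalar_action sc" shows "sc 0 x = 0"
proof -
  have "sc (of_real 0) x = scaleR 0 x" using assms unfolding scalar_action_def by blast
  then show ?thesis by simp
qed

lemma scalar_action_of_real_mult:
  assumes "scalar_action sc" shows "sc (of_real r * a) x = scaleR r (sc a x)"
proof -
  have "sc (of_real r * a) x = sc (of_real r) (sc a x)"
    using assms unfolding scalar_action_def by blast
  also have "\<dots> = scaleR r (sc a x)" using assms unfolding scalar_action_def by blast
  finally show ?thesis .
qed

lemma scalar_action_norm:
  assumes "scalar_action sc" shows "norm (sc a x) = norm a * norm x"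
  using assms unfolding scalar_action_def by blast

lemma basis_expansion_LIMSEQ:
  assumes "schauder_basis sc e"
  shows "(\<lambda>N. \<Sum>n<N. sc (basis_coeff sc e x n) (e n)) \<longlonglongrightarrow> x"
proof -
  have "\<exists>!a. (\<lambda>N. \<Sum>n<N. sc (a n) (e n)) \<longlonglongrightarrow> x"
    using assms unfolding schauder_basis_def by blast
  then show ?thesis unfolding basis_coeff_def by (rule theI')
qed

lemma basis_coeff_unique:
  assumes "schauder_basis sc e"
    and "(\<lambda>N. \<Sum>n<N. sc (a n) (e n)) \<longlonglongrightarrow> z"
  shows "basis_coeff sc e z = a"
proof -
  have "\<exists>!a. (\<lambda>N. \<Sum>n<N. sc (a n) (e n)) \<longlonglongrightarrow> z"
    using assms(1) unfolding schauder_basis_def by blast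
  then show ?thesis unfolding basis_coeff_def
    using assms(2) the1_equality[of "\<lambda>a. (\<lambda>N. \<Sum>n<N. sc (a n) (e n)) \<longlonglongrightarrow> z"] by blast
qed

lemma basis_coeff_bounded:
  assumes sa: "scalar_action sc" and sb: "schauder_basis sc e" and sn: "semi_normalized e"
  obtains M where "M > 0" "\<And>k. norm (basis_coeff sc e x k) \<le> M"
proof -
  define c where "c = basis_coeff sc e x"
  define S where "S = (\<lambda>N. \<Sum>n<N. sc (c n) (e n))"
  have "Bseq S"
    using basis_expansion_LIMSEQ[OF sb, of x] unfolding S_def c_def
    by (intro convergent_imp_Bseq) (auto simp: convergent_def)
  then obtain B where B: "B > 0" "\<forall>n. norm (S n) \<le> B" by (rule BseqE)
  obtain \<epsilon> where \<epsilon>: "0 < \<epsilon>" "\<And>n. \<epsilon> \<le> norm (e n)"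
    using sn unfolding semi_normalized_def by blast
  have "norm (c k) \<le> 2 * B / \<epsilon>" for k
  proof -
    have "norm (c k) * \<epsilon> \<le> norm (c k) * norm (e k)"
      using \<epsilon> by (simp add: mult_left_mono)
    also have "\<dots> = norm (S (Suc k) - S k)"
      by (simp add: S_def scalar_action_norm[OF sa])
    also have "\<dots> \<le> 2 * B"
      using B(2) norm_triangle_ineq4[of "S (Suc k)" "S k"] by (smt (verit))
    finally show ?thesis using \<epsilon> by (simp add: field_simps)
  qed
  with B \<epsilon> show ?thesis using that[of "2 * B / \<epsilon>"] by (simp add: c_def)
qed

lemma basis_coeff_shrink_outside:
  fixes sc :: "'k::real_normed_field \<Rightarrow> 'a::real_normed_vector \<Rightarrow> 'a"
  assumes sa: "scalar_action sc" and sb: "schauder_basis sc e" and fin: "finite F"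
  shows "basis_coeff sc e (scaleR d x + scaleR (1 - d) (greedy_sum sc e x F))
         = (\<lambda>k. if k \<in> F then basis_coeff sc e x k else of_real d * basis_coeff sc e x k)"
    (is "basis_coeff sc e ?y = ?a")
proof (rule basis_coeff_unique[OF sb])
  define c where "c = basis_coeff sc e x"
  obtain m where F: "F \<subseteq> {..<m}" using fin finite_nat_bounded by blast
  have summand: "sc (?a n) (e n) = scaleR d (sc (c n) (e n))
      + (if n \<in> F then scaleR (1 - d) (sc (c n) (e n)) else 0)" for n
    by (cases "n \<in> F")
      (simp_all add: c_def scalar_action_of_real_mult[OF sa] scaleR_left_distrib[symmetric])
  have partial_sum: "(\<Sum>n<N. sc (?a n) (e n))
      = scaleR d (\<Sum>n<N. sc (c n) (e n)) + scaleR (1 - d) (greedy_sum sc e x F)"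
    if "N \<ge> m" for N
  proof -
    have "(\<Sum>n<N. if n \<in> F then scaleR (1 - d) (sc (c n) (e n)) else 0)
        = (\<Sum>n\<in>{..<N} \<inter> F. scaleR (1 - d) (sc (c n) (e n)))"
      by (simp add: sum.inter_restrict)
    also have "{..<N} \<inter> F = F" using F that by auto
    finally show ?thesis
      unfolding summand greedy_sum_def by (simp add: sum.distrib scaleR_sum_right c_def)
  qed
  have "(\<lambda>N. scaleR d (\<Sum>n<N. sc (c n) (e n)) + scaleR (1 - d) (greedy_sum sc e x F))
      \<longlonglongrightarrow> ?y"
    using basis_expansion_LIMSEQ[OF sb, of x] unfolding c_def by (intro tendsto_intros)
  then show "(\<lambda>N. \<Sum>n<N. sc (?a n) (e n)) \<longlonglongrightarrow> ?y"
    by (rule Lim_transform_eventually)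
      (auto simp: eventually_sequentially partial_sum intro!: exI[of _ m])
qed

lemma greedy_sum_drop_zero_coeffs:
  assumes "scalar_action sc" and "finite F"
  shows "greedy_sum sc e x {j\<in>F. basis_coeff sc e x j \<noteq> 0} = greedy_sum sc e x F"
  unfolding greedy_sum_def
  by (rule sum.mono_neutral_left) (auto simp: assms scalar_action_zero)

lemma norm_greedy_sum_le_of_weakly_1_greedy:
  fixes sc :: "'k::real_normed_field \<Rightarrow> 'a::real_normed_vector \<Rightarrow> 'a"
  assumes sa: "scalar_action sc" and sb: "schauder_basis sc e" and sn: "semi_normalized e"
    and weak: "\<forall>x N A. greedy_set sc e x N A \<longrightarrow> norm (greedy_sum sc e x A) \<le> norm x"
    and fin: "finite F0"
  shows "norm (greedy_sum sc e x F0) \<le> norm x"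
proof -
  define c where "c = basis_coeff sc e x"
  define F where "F = {j\<in>F0. c j \<noteq> 0}"
  define v where "v = greedy_sum sc e x F"
  have finF: "finite F" using fin by (simp add: F_def)
  have v: "greedy_sum sc e x F0 = v"
    using greedy_sum_drop_zero_coeffs[OF sa fin] by (simp add: v_def F_def c_def)
  have "norm v \<le> norm x"
  proof (cases "F = {}")
    case True then show ?thesis by (simp add: v_def greedy_sum_def)
  next
    case False
    obtain M where M: "M > 0" "\<And>k. norm (c k) \<le> M"
      using basis_coeff_bounded[OF sa sb sn] unfolding c_def by blast
    define m0 where "m0 = Min ((\<lambda>j. norm (c j)) ` F)"
    have m0_le: "m0 \<le> norm (c j)" if "j \<in> F" for j
      unfolding m0_def using finF that by simp
    have m0_pos: "m0 > 0"
      unfolding m0_def using finF False by (subst Min_gr_iff) (auto simp: F_def)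
    define d where "d = min 1 (m0 / M)"
    have d: "0 < d" "d \<le> 1" "d * M \<le> m0"
      using m0_pos M unfolding d_def by (auto simp: field_simps min_def)
    define y where "y = scaleR d x + scaleR (1 - d) v"
    have coeff_y: "basis_coeff sc e y = (\<lambda>k. if k \<in> F then c k else of_real d * c k)"
      unfolding y_def v_def c_def by (rule basis_coeff_shrink_outside[OF sa sb finF])
    have "greedy_set sc e y (card F) F"
      unfolding greedy_set_def coeff_y
    proof (intro conjI ballI allI impI finF refl)
      fix j k assume j: "j \<in> F" and k: "k \<notin> F"
      have "norm (of_real d * c k) \<le> d * M"
        using M d by (simp add: norm_mult mult_left_mono)
      also have "\<dots> \<le> norm (c j)" using d(3) m0_le[OF j] by linarith
      finally show "norm (if k \<in> F then c k else of_real d * c k)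
                    \<le> norm (if j \<in> F then c j else of_real d * c j)"
        using j k by simp
    qed
    moreover have "greedy_sum sc e y F = v"
      unfolding greedy_sum_def coeff_y v_def c_def by simp
    ultimately have "norm v \<le> norm y" using weak by metis
    also have "\<dots> \<le> d * norm x + (1 - d) * norm v"
      unfolding y_def using d norm_triangle_ineq[of "scaleR d x" "scaleR (1 - d) v"] by simp
    finally have "d * norm v \<le> d * norm x" by (simp add: algebra_simps)
    then show ?thesis using d by simp
  qed
  then show ?thesis using v by simp
qed

lemma norm_diff_greedy_sum_le_of_weakly_1_greedy:
  fixes sc :: "'k::real_normed_field \<Rightarrow> 'a::real_normed_vector \<Rightarrow> 'a"
  assumes sa: "scalar_action sc" and sb: "schauder_basis sc e" and sn: "semi_normalized e"
    and weak: "\<forall>x N A. greedy_set sc e x N A \<longrightarrow> norm (greedy_sum sc e x A) \<le> norm x"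
    and fin: "finite A"
  shows "norm (x - greedy_sum sc e x A) \<le> norm x"
proof -
  define c where "c = basis_coeff sc e x"
  obtain m0 where A: "A \<subseteq> {..<m0}" using fin finite_nat_bounded by blast
  have split: "greedy_sum sc e x ({..<m} - A) = (\<Sum>n<m. sc (c n) (e n)) - greedy_sum sc e x A"
    if "m \<ge> m0" for m
  proof -
    have "A \<subseteq> {..<m}" using A that by auto
    then show ?thesis unfolding greedy_sum_def c_def by (simp add: sum_diff)
  qed
  have "(\<lambda>m. (\<Sum>n<m. sc (c n) (e n)) - greedy_sum sc e x A) \<longlonglongrightarrow> x - greedy_sum sc e x A"
    using basis_expansion_LIMSEQ[OF sb, of x] unfolding c_def by (intro tendsto_intros)
  then have "(\<lambda>m. greedy_sum sc e x ({..<m} - A)) \<longlonglongrightarrow> x - greedy_sum sc e x A"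
    by (rule Lim_transform_eventually)
      (auto simp: eventually_sequentially split intro!: exI[of _ m0])
  moreover have "norm (greedy_sum sc e x ({..<m} - A)) \<le> norm x" for m
    by (rule norm_greedy_sum_le_of_weakly_1_greedy[OF sa sb sn weak]) simp
  ultimately show ?thesis
    by (intro Lim_norm_ubound[OF trivial_limit_sequentially]) (auto intro: always_eventually)
qed

theorem corollary2p2:
  shows "(\<forall>e :: nat \<Rightarrow> 'a::banach.
           schauder_basis scaleR e \<and> semi_normalized e \<and>
           (\<forall>x N A. greedy_set scaleR e x N A \<longrightarrow> norm (greedy_sum scaleR e x A) \<le> norm x)
           \<longrightarrow> (\<forall>x N A. greedy_set scaleR e x N A \<longrightarrow> norm (x - greedy_sum scaleR e x A) \<le> norm x)) \<and>
         (\<forall>(sc :: complex \<Rightarrow> 'b::banach \<Rightarrow> 'b) (e :: nat \<Rightarrow> 'b).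
           scalar_action sc \<and> schauder_basis sc e \<and> semi_normalized e \<and>
           (\<forall>x N A. greedy_set sc e x N A \<longrightarrow> norm (greedy_sum sc e x A) \<le> norm x)
           \<longrightarrow> (\<forall>x N A. greedy_set sc e x N A \<longrightarrow> norm (x - greedy_sum sc e x A) \<le> norm x))"
proof (intro conjI allI impI)
  fix e :: "nat \<Rightarrow> 'a" and x N A
  assume "schauder_basis scaleR e \<and> semi_normalized e \<and>
      (\<forall>x N A. greedy_set scaleR e x N A \<longrightarrow> norm (greedy_sum scaleR e x A) \<le> norm x)"
    and "greedy_set scaleR e x N A"
  then show "norm (x - greedy_sum scaleR e x A) \<le> norm x"
    by (intro norm_diff_greedy_sum_le_of_weakly_1_greedy[OF scalar_action_scaleR])
      (simp_all add: greedy_set_def)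
next
  fix sc :: "complex \<Rightarrow> 'b \<Rightarrow> 'b" and e :: "nat \<Rightarrow> 'b" and x N A
  assume "scalar_action sc \<and> schauder_basis sc e \<and> semi_normalized e \<and>
      (\<forall>x N A. greedy_set sc e x N A \<longrightarrow> norm (greedy_sum sc e x A) \<le> norm x)"
    and "greedy_set sc e x N A"
  then show "norm (x - greedy_sum sc e x A) \<le> norm x"
    by (intro norm_diff_greedy_sum_le_of_weakly_1_greedy) (simp_all add: greedy_set_def)
qed

end
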